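(* (i) Every invertible linear map $A:\mathcal{F}_p\to\mathcal{F}_p$ (resp. $\mathcal{F}_c\to\mathcal{F}_c$), $f\mapsto fA$, preserves static equilibrium: a force system $\{f_i\}_{i\in\mathcal{I}}$ satisfies $\sum_i f_i=0$ if and only if $\sum_i f_iA=0$. Every projective transformation of a statics problem can be described as the composition of a linear-map equivalence class $A_\sim=\{\lambda A:\lambda\neq 0\}$ acting on the forces and an equilibrium preserving congruence of the force system, and every such composition gives a projective transformation of the statics problem. (ii) Every invertible linear map $A:\mathcal{E}_p\to\mathcal{E}_p$ (resp. $\mathcal{E}_c\to\mathcal{E}_c$), $e\mapsto eA$, preserves compatibility. Every projective transformation of a kinematics problem can be described as the composition of a linear-map equivalence class acting on the velocities and a compatibility preserving congruence of the velocity system, and every such composition gives a projective transformation of the kinematics problem.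
   Context: Points of the real projective plane $PG(2)$ are classes of nonzero vectors of $\mathbb{R}^3$ up to nonzero scaling; a Euclidean point $\vec p\in\mathbb{R}^2$ is $(\vec p,1)$ and an ideal point in direction $\vec u$ is $(\vec u,0)$. Lines are also represented by nonzero vectors up to scaling, and point $p$ lies on line $l$ iff $\langle p,l\rangle=0$. A projective transformation of $PG(2)$ (map sending points to points, lines to lines, preserving incidence) is given by an invertible $3\times3$ matrix $P$ up to scaling, acting on points as $p\mapsto pP$ and on lines as $l\mapsto lP^{-T}$. Mechanical quantities (bodies lie in the $x,y$ plane): $\mathcal{F}_p$: a coplanar force with components $F_x,F_y$ and moment $M_z$ about the origin is $f=(-F_y,F_x,M_z)\in\mathbb{R}^3$; its line of action is the projective line $f$ (up to scaling). $\mathcal{F}_c$: a force orthogonal to the plane with $z$-component $F_z$ and moments $M_x,M_y$ about the coordinate axes is $f=(-M_y,M_x,F_z)$; it represents its point of action. $\mathcal{E}_c$: a planar rigid motion with velocity $(v_x,v_y)$ of the origin and angular velocity $\omega_z$ is $e=(-v_y,v_x,\omega_z)$, representing the point about which the body rotates. $\mathcal{E}_p$: a motion with $z$-velocity $v_z$ of the origin and angular velocity components $\omega_x,\omega_y$ is $e=(-\omega_y,\omega_x,v_z)$, representing the line about which the body rotates. A force system on a body is in static equilibrium iff the sum of its vectors is $0$. Compatibility conditions have the form $\langle l,e_j-e_k\rangle=0$ for a line $l$ (in $\mathcal{E}_c$) or $\langle p,e_j-e_k\rangle=0$ for a point $p$ (in $\mathcal{E}_p$), for velocities $e_j,e_k$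 of two bodies. A congruence of a force (resp. velocity) system $\{f_i\}$ is a map $\{f_i\}\mapsto\{\psi_if_i\}$ with all $\psi_i\in\mathbb{R}\setminus\{0\}$; it is equilibrium (resp. compatibility) preserving for a given problem if static equilibrium (resp. compatibility) of all (sub)bodies of the problem is preserved. A projective transformation of a statics (resp. kinematics) problem is a transformation of the structure into another one such that all points and lines of the structure, and the points and lines of action of the forces (resp. velocities), are transformed by one projective transformation of $PG(2)$, and the image is in static equilibrium (resp. compatible) if and only if the original is. *)

theory Defs
  imports "HOL-Analysis.Analysis"
begin

text \<open>Projective points and lines of PG(2) are represented by vectors of real^3
  (up to nonzero scaling). Points transform as p |-> p P, lines as l |-> l P^(-T).\<close>

datatype pkind = PointK | LineK

text \<open>F_p: coplanar forces (represent lines of action);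
  F_c: forces orthogonal to the plane (represent points of action);
  E_c: planar motions (represent rotation points);
  E_p: out-of-plane motions (represent rotation lines).\<close>
datatype force_space = Fp | Fc
datatype vel_space = Ec | Ep

fun force_kind :: "force_space \<Rightarrow> pkind" where
  "force_kind Fp = LineK"
| "force_kind Fc = PointK"

fun vel_kind :: "vel_space \<Rightarrow> pkind" where
  "vel_kind Ec = PointK"
| "vel_kind Ep = LineK"

fun dual_kind :: "pkind \<Rightarrow> pkind" where
  "dual_kind PointK = LineK"
| "dual_kind LineK = PointK"

definition proj_matrix :: "pkind \<Rightarrow> real^3^3 \<Rightarrow> real^3^3" where
  "proj_matrix k P = (case k of PointK \<Rightarrow> P | LineK \<Rightarrow> matrix_inv (transpose P))"

definition proj_act :: "pkind \<Rightarrow> real^3^3 \<Rightarrow> real^3 \<Rightarrow> real^3" where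
  "proj_act k P v = v v* proj_matrix k P"

definition lin_class :: "real^3^3 \<Rightarrow> (real^3^3) set" where
  "lin_class A = {c *\<^sub>R A | c. c \<noteq> 0}"

text \<open>A statics problem: force system f on the finite index set I; bodies (and
  sub-bodies) are given as the sets Bs of indices of forces acting on them.\<close>
definition in_equilibrium :: "'i set set \<Rightarrow> ('i \<Rightarrow> real^3) \<Rightarrow> bool" where
  "in_equilibrium Bs f \<longleftrightarrow> (\<forall>B\<in>Bs. (\<Sum>i\<in>B. f i) = 0)"

definition congruence :: "('i \<Rightarrow> real) \<Rightarrow> ('i \<Rightarrow> real^3) \<Rightarrow> ('i \<Rightarrow> real^3)" where
  "congruence \<psi> f = (\<lambda>i. \<psi> i *\<^sub>R f i)"

definition equilibrium_preserving :: "'i set set \<Rightarrow> ('i \<Rightarrow> real) \<Rightarrow> ('i \<Rightarrow> real^3) \<Rightarrow> bool" where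
  "equilibrium_preserving Bs \<psi> f \<longleftrightarrow> (in_equilibrium Bs (congruence \<psi> f) \<longleftrightarrow> in_equilibrium Bs f)"

definition statics_proj_transf ::
  "force_space \<Rightarrow> 'i set \<Rightarrow> 'i set set \<Rightarrow> ('i \<Rightarrow> real^3) \<Rightarrow> real^3^3 \<Rightarrow> ('i \<Rightarrow> real^3) \<Rightarrow> bool" where
  "statics_proj_transf S I Bs f P g \<longleftrightarrow>
     invertible P
     \<and> (\<forall>i\<in>I. \<exists>c. c \<noteq> 0 \<and> g i = c *\<^sub>R proj_act (force_kind S) P (f i))
     \<and> (in_equilibrium Bs g \<longleftrightarrow> in_equilibrium Bs f)"

text \<open>A kinematics problem: velocities e of the bodies indexed by J; compatibility
  conditions C given as triples (c, j, k) meaning <c, e_j - e_k> = 0, where c is a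
  line (for E_c) or a point (for E_p).\<close>
definition compatible :: "((real^3) \<times> 'j \<times> 'j) set \<Rightarrow> ('j \<Rightarrow> real^3) \<Rightarrow> bool" where
  "compatible C e \<longleftrightarrow> (\<forall>(c, j, k)\<in>C. c \<bullet> (e j - e k) = 0)"

definition map_constraints :: "(real^3 \<Rightarrow> real^3) \<Rightarrow> ((real^3) \<times> 'j \<times> 'j) set \<Rightarrow> ((real^3) \<times> 'j \<times> 'j) set" where
  "map_constraints h C = (\<lambda>(c, j, k). (h c, j, k)) ` C"

definition compatibility_preserving :: "((real^3) \<times> 'j \<times> 'j) set \<Rightarrow> ('j \<Rightarrow> real) \<Rightarrow> ('j \<Rightarrow> real^3) \<Rightarrow> bool" where
  "compatibility_preserving C \<psi> e \<longleftrightarrow> (compatible C (congruence \<psi> e) \<longleftrightarrow> compatible C e)"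

definition kin_proj_transf ::
  "vel_space \<Rightarrow> 'j set \<Rightarrow> ((real^3) \<times> 'j \<times> 'j) set \<Rightarrow> ('j \<Rightarrow> real^3) \<Rightarrow> real^3^3 \<Rightarrow> ('j \<Rightarrow> real^3) \<Rightarrow> bool" where
  "kin_proj_transf S J C e P g \<longleftrightarrow>
     invertible P
     \<and> (\<forall>j\<in>J. \<exists>c. c \<noteq> 0 \<and> g j = c *\<^sub>R proj_act (vel_kind S) P (e j))
     \<and> (compatible (map_constraints (proj_act (dual_kind (vel_kind S)) P) C) g \<longleftrightarrow> compatible C e)"

end

theory Submission
  imports Defs
begin

text \<open>A projective transformation determines each representing vector only up to a
  nonzero factor, and the matrix \<open>proj_matrix k P\<close> acting on them only up to scale, so
  the image of a force (velocity) system is a congruence of the system followed by a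
  matrix of \<open>lin_class (proj_matrix k P)\<close>. Equilibrium (vanishing of sums) is invariant
  under every invertible linear map, and so is compatibility, because a line transformed
  by \<open>A\<^sup>-\<^sup>T\<close> pairs with a point transformed by \<open>A\<close> exactly as before. Hence the
  image is in equilibrium (compatible) iff the congruence is, i.e. the condition on the
  image says precisely that the congruence is equilibrium (compatibility) preserving.
  Every invertible matrix is \<open>proj_matrix k P\<close> for some invertible \<open>P\<close>, which gives the
  second half of (i) and (ii). Finiteness of the index sets plays no role.\<close>

lemma matrix_inv_mult:
  fixes A :: "'a::semiring_1^'n^'m"
  assumes "invertible A"
  shows "A ** matrix_inv A = mat 1" "matrix_inv A ** A = mat 1"
proof -
  have "\<exists>A'. A ** A' = mat 1 \<and> A' ** A = mat 1"
    using assms unfolding invertible_def by blast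
  then have "A ** matrix_inv A = mat 1 \<and> matrix_inv A ** A = mat 1"
    unfolding matrix_inv_def by (rule someI_ex)
  then show "A ** matrix_inv A = mat 1" "matrix_inv A ** A = mat 1" by auto
qed

lemma matrix_inv_unique:
  fixes A B :: "'a::field^'n^'n"
  assumes "A ** B = mat 1"
  shows "matrix_inv A = B"
proof -
  have "invertible A" using assms invertible_right_inverse by blast
  have "matrix_inv A = matrix_inv A ** (A ** B)" using assms by (simp add: matrix_mul_rid)
  also have "\<dots> = (matrix_inv A ** A) ** B" by (simp add: matrix_mul_assoc)
  also have "\<dots> = B" using matrix_inv_mult[OF \<open>invertible A\<close>] by (simp add: matrix_mul_lid)
  finally show ?thesis .
qed

lemma invertible_matrix_inv:
  fixes A :: "'a::semiring_1^'n^'m"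
  assumes "invertible A"
  shows "invertible (matrix_inv A)"
  using matrix_inv_mult[OF assms] invertible_def by blast

lemma matrix_inv_matrix_inv:
  fixes A :: "'a::field^'n^'n"
  assumes "invertible A"
  shows "matrix_inv (matrix_inv A) = A"
  using matrix_inv_mult[OF assms] matrix_inv_unique by blast

lemma matrix_inv_transpose:
  fixes A :: "real^'n^'n"
  assumes "invertible A"
  shows "matrix_inv (transpose A) = transpose (matrix_inv A)"
  by (rule matrix_inv_unique) (metis matrix_inv_mult(2)[OF assms] matrix_transpose_mul transpose_mat)

lemma vector_matrix_mult_eq_0_iff:
  fixes A :: "real^'n^'n"
  assumes "invertible A"
  shows "x v* A = 0 \<longleftrightarrow> x = 0"
proof
  assume "x v* A = 0"
  then have "(x v* A) v* matrix_inv A = 0" by simp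
  then show "x = 0"
    using matrix_inv_mult[OF assms] by (simp add: vector_matrix_mul_assoc)
qed simp

lemma vector_matrix_mult_sum:
  fixes A :: "real^'m^'n"
  shows "(\<Sum>i\<in>B. f i) v* A = (\<Sum>i\<in>B. f i v* A)"
  by (simp flip: transpose_matrix_vector add: linear_sum[OF matrix_vector_mul_linear])

lemma inner_contragredient:
  fixes A :: "real^'n^'n"
  assumes "invertible A"
  shows "(x v* matrix_inv (transpose A)) \<bullet> (y v* A) = x \<bullet> y"
proof -
  have "(x v* matrix_inv (transpose A)) \<bullet> (y v* A)
      = x \<bullet> (matrix_inv (transpose A) *v (transpose A *v y))"
    by (metis dot_lmul_matrix transpose_matrix_vector)
  also have "\<dots> = x \<bullet> y"
    using matrix_inv_mult(2)[OF transpose_invertible[OF assms]]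
    by (metis matrix_vector_mul_assoc matrix_vector_mul_lid)
  finally show ?thesis .
qed

lemma lin_class_self: "M \<in> lin_class M"
  unfolding lin_class_def by (rule CollectI, rule exI[of _ 1]) simp

lemma invertible_lin_class: "invertible M \<Longrightarrow> A \<in> lin_class M \<Longrightarrow> invertible A"
  unfolding lin_class_def using scalar_invertible by blast

lemma invertible_proj_matrix: "invertible P \<Longrightarrow> invertible (proj_matrix k P)"
  by (cases k) (simp_all add: proj_matrix_def invertible_matrix_inv transpose_invertible)

lemma proj_matrix_dual_kind:
  assumes "invertible P"
  shows "proj_matrix (dual_kind k) P = matrix_inv (transpose (proj_matrix k P))"
  using assms
  by (cases k) (simp_all add: proj_matrix_def matrix_inv_transpose matrix_inv_matrix_inv transpose_invertible)

lemma proj_matrix_surj: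
  assumes "invertible A"
  shows "\<exists>P. invertible P \<and> proj_matrix k P = A"
proof (cases k)
  case PointK
  then show ?thesis using assms by (auto simp: proj_matrix_def)
next
  case LineK
  have "invertible (transpose (matrix_inv A))"
    by (simp add: assms invertible_matrix_inv transpose_invertible)
  moreover have "proj_matrix k (transpose (matrix_inv A)) = A"
    using LineK assms by (simp add: proj_matrix_def matrix_inv_matrix_inv)
  ultimately show ?thesis by blast
qed

lemma ex_lin_class_proj_matrix_iff:
  "(\<exists>P. invertible P \<and> (\<exists>A \<psi>. A \<in> lin_class (proj_matrix k P) \<and> R A \<psi>))
     \<longleftrightarrow> (\<exists>A \<psi>. invertible A \<and> R A \<psi>)"
proof
  assume "\<exists>P. invertible P \<and> (\<exists>A \<psi>. A \<in> lin_class (proj_matrix k P) \<and> R A \<psi>)"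
  then obtain P A \<psi> where "invertible P" "A \<in> lin_class (proj_matrix k P)" "R A \<psi>" by blast
  then show "\<exists>A \<psi>. invertible A \<and> R A \<psi>"
    using invertible_lin_class invertible_proj_matrix by blast
next
  assume "\<exists>A \<psi>. invertible A \<and> R A \<psi>"
  then obtain A \<psi> where "invertible A" "R A \<psi>" by blast
  moreover obtain P where "invertible P" "proj_matrix k P = A"
    using proj_matrix_surj[OF \<open>invertible A\<close>] by blast
  ultimately show "\<exists>P. invertible P \<and> (\<exists>A \<psi>. A \<in> lin_class (proj_matrix k P) \<and> R A \<psi>)"
    using lin_class_self by blast
qed

lemma in_equilibrium_vector_matrix_mult:
  assumes "\<forall>B\<in>Bs. B \<subseteq> I" "invertible A" "\<forall>i\<in>I. g i = h i v* A"
  shows "in_equilibrium Bs g \<longleftrightarrow> in_equilibrium Bs h"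
proof -
  have "(\<Sum>i\<in>B. g i) = (\<Sum>i\<in>B. h i) v* A" if "B \<in> Bs" for B
    using assms(1,3) that by (simp add: vector_matrix_mult_sum subset_iff)
  then show ?thesis
    unfolding in_equilibrium_def using vector_matrix_mult_eq_0_iff[OF assms(2)] by auto
qed

lemma compatible_vector_matrix_mult:
  assumes "\<forall>(c, j, k)\<in>C. j \<in> J \<and> k \<in> J" "invertible A" "\<forall>j\<in>J. g j = h j v* A"
  shows "compatible (map_constraints (\<lambda>c. c v* matrix_inv (transpose A)) C) g \<longleftrightarrow> compatible C h"
proof -
  have "(c v* matrix_inv (transpose A)) \<bullet> (g j - g k) = c \<bullet> (h j - h k)"
    if "(c, j, k) \<in> C" for c j k
  proof -
    have "g j - g k = (h j - h k) v* A"
      using assms(1,3) that by (auto simp: vector_matrix_mult_diff_distrib)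
    then show ?thesis by (simp add: inner_contragredient[OF assms(2)])
  qed
  then show ?thesis unfolding compatible_def map_constraints_def by auto
qed

lemma compatible_scaleR:
  assumes "a \<noteq> 0"
  shows "compatible C (\<lambda>j. a *\<^sub>R e j) \<longleftrightarrow> compatible C e"
  using assms unfolding compatible_def by (simp flip: scaleR_diff_right)

text \<open>\<open>Q\<close> is the condition on the original problem, \<open>Q'\<close> the transformed condition on
  the image; the hypothesis says that \<open>Q'\<close> sees only the congruence, not which matrix of
  \<open>lin_class M\<close> follows it.\<close>

lemma scaled_image_iff_congruence:
  assumes invariant: "\<And>A \<psi> g. A \<in> lin_class M \<Longrightarrow> \<forall>i\<in>I. g i = congruence \<psi> f i v* A
      \<Longrightarrow> Q' g \<longleftrightarrow> Q (congruence \<psi> f)"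
  shows "((\<forall>i\<in>I. \<exists>c. c \<noteq> 0 \<and> g i = c *\<^sub>R (f i v* M)) \<and> (Q' g \<longleftrightarrow> Q f))
     \<longleftrightarrow> (\<exists>A \<psi>. A \<in> lin_class M \<and> (\<forall>i\<in>I. \<psi> i \<noteq> 0)
               \<and> (Q (congruence \<psi> f) \<longleftrightarrow> Q f) \<and> (\<forall>i\<in>I. g i = congruence \<psi> f i v* A))"
    (is "?image \<and> _ \<longleftrightarrow> _")
proof
  assume "?image \<and> (Q' g \<longleftrightarrow> Q f)"
  then obtain \<psi> where \<psi>: "\<forall>i\<in>I. \<psi> i \<noteq> 0 \<and> g i = \<psi> i *\<^sub>R (f i v* M)"
    and Q: "Q' g \<longleftrightarrow> Q f" by metis
  have g: "\<forall>i\<in>I. g i = congruence \<psi> f i v* M"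
    using \<psi> by (simp add: congruence_def scaleR_vector_matrix_assoc)
  show "\<exists>A \<psi>. A \<in> lin_class M \<and> (\<forall>i\<in>I. \<psi> i \<noteq> 0)
          \<and> (Q (congruence \<psi> f) \<longleftrightarrow> Q f) \<and> (\<forall>i\<in>I. g i = congruence \<psi> f i v* A)"
    using lin_class_self \<psi> g Q invariant[OF lin_class_self g] by blast
next
  assume "\<exists>A \<psi>. A \<in> lin_class M \<and> (\<forall>i\<in>I. \<psi> i \<noteq> 0)
          \<and> (Q (congruence \<psi> f) \<longleftrightarrow> Q f) \<and> (\<forall>i\<in>I. g i = congruence \<psi> f i v* A)"
  then obtain A \<psi> where A: "A \<in> lin_class M" and \<psi>: "\<forall>i\<in>I. \<psi> i \<noteq> 0"
    and Q: "Q (congruence \<psi> f) \<longleftrightarrow> Q f" and g: "\<forall>i\<in>I. g i = congruence \<psi> f i v* A"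
    by blast
  obtain a where a: "a \<noteq> 0" "A = a *\<^sub>R M" using A unfolding lin_class_def by blast
  have "g i = (a * \<psi> i) *\<^sub>R (f i v* M) \<and> a * \<psi> i \<noteq> 0" if "i \<in> I" for i
    using g \<psi> a that
    by (simp add: congruence_def scaleR_vector_matrix_assoc vector_scaleR_matrix_ac)
  then show "?image \<and> (Q' g \<longleftrightarrow> Q f)"
    using Q invariant[OF A g] by blast
qed

lemma statics_proj_transf_iff:
  assumes "\<forall>B\<in>Bs. B \<subseteq> I"
  shows "statics_proj_transf S I Bs f P g \<longleftrightarrow> invertible P \<and>
           (\<exists>A \<psi>. A \<in> lin_class (proj_matrix (force_kind S) P) \<and> (\<forall>i\<in>I. \<psi> i \<noteq> 0)
               \<and> equilibrium_preserving Bs \<psi> f \<and> (\<forall>i\<in>I. g i = congruence \<psi> f i v* A))"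
proof (cases "invertible P")
  case True
  define M where "M = proj_matrix (force_kind S) P"
  have "invertible M" unfolding M_def using True by (rule invertible_proj_matrix)
  have "in_equilibrium Bs g \<longleftrightarrow> in_equilibrium Bs (congruence \<psi> f)"
    if "A \<in> lin_class M" "\<forall>i\<in>I. g i = congruence \<psi> f i v* A" for A \<psi> g
    using in_equilibrium_vector_matrix_mult[OF assms invertible_lin_class[OF \<open>invertible M\<close>]] that
    by blast
  then show ?thesis
    unfolding statics_proj_transf_def equilibrium_preserving_def
    using scaled_image_iff_congruence[where Q = "in_equilibrium Bs"] True
    by (simp add: proj_act_def M_def)
qed (simp add: statics_proj_transf_def)

lemma kin_proj_transf_iff:
  assumes "\<forall>(c, j, k)\<in>C. j \<in> J \<and> k \<in> J"
  shows "kin_proj_transf S J C e P g \<longleftrightarrow> invertible P \<and>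
           (\<exists>A \<psi>. A \<in> lin_class (proj_matrix (vel_kind S) P) \<and> (\<forall>j\<in>J. \<psi> j \<noteq> 0)
               \<and> compatibility_preserving C \<psi> e \<and> (\<forall>j\<in>J. g j = congruence \<psi> e j v* A))"
proof (cases "invertible P")
  case True
  define M where "M = proj_matrix (vel_kind S) P"
  have "invertible M" unfolding M_def using True by (rule invertible_proj_matrix)
  have dual: "proj_act (dual_kind (vel_kind S)) P = (\<lambda>c. c v* matrix_inv (transpose M))"
    using proj_matrix_dual_kind[OF True] by (simp add: M_def proj_act_def fun_eq_iff)
  have "compatible (map_constraints (\<lambda>c. c v* matrix_inv (transpose M)) C) g
          \<longleftrightarrow> compatible C (congruence \<psi> e)"
    if "A \<in> lin_class M" "\<forall>j\<in>J. g j = congruence \<psi> e j v* A" for A \<psi> g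
  proof -
    obtain a where "a \<noteq> 0" "A = a *\<^sub>R M" using \<open>A \<in> lin_class M\<close> unfolding lin_class_def by blast
    then have "\<forall>j\<in>J. g j = (a *\<^sub>R congruence \<psi> e j) v* M"
      using that(2) by (simp add: vector_scaleR_matrix_ac scaleR_vector_matrix_assoc)
    then show ?thesis
      using compatible_vector_matrix_mult[OF assms \<open>invertible M\<close>]
        compatible_scaleR[OF \<open>a \<noteq> 0\<close>, of C "congruence \<psi> e"]
      by metis
  qed
  then show ?thesis
    unfolding kin_proj_transf_def dual compatibility_preserving_def
    using scaled_image_iff_congruence[where Q = "compatible C"] True
    by (simp add: proj_act_def M_def)
qed (simp add: kin_proj_transf_def)

theorem theorem3:
  shows
  "\<comment> \<open>(i) linear maps preserve static equilibrium\<close>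
   (\<forall>(A::real^3^3) (Bs::'i set set) (f::'i \<Rightarrow> real^3).
      invertible A \<longrightarrow> (in_equilibrium Bs f \<longleftrightarrow> in_equilibrium Bs (\<lambda>i. f i v* A)))
 \<and> (\<forall>(S::force_space) (I::'i set) (Bs::'i set set) (f::'i \<Rightarrow> real^3).
      finite I \<and> (\<forall>B\<in>Bs. B \<subseteq> I) \<longrightarrow>
      (\<forall>P g. invertible P \<longrightarrow>
         (statics_proj_transf S I Bs f P g \<longleftrightarrow>
           (\<exists>A \<psi>. A \<in> lin_class (proj_matrix (force_kind S) P) \<and> (\<forall>i\<in>I. \<psi> i \<noteq> 0)
               \<and> equilibrium_preserving Bs \<psi> f \<and> (\<forall>i\<in>I. g i = congruence \<psi> f i v* A))))
    \<and> (\<forall>g. (\<exists>P. statics_proj_transf S I Bs f P g) \<longleftrightarrow>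
           (\<exists>A \<psi>. invertible A \<and> (\<forall>i\<in>I. \<psi> i \<noteq> 0)
               \<and> equilibrium_preserving Bs \<psi> f \<and> (\<forall>i\<in>I. g i = congruence \<psi> f i v* A))))
 \<and> \<comment> \<open>(ii) linear maps preserve compatibility\<close>
   (\<forall>(A::real^3^3) (C::((real^3) \<times> 'j \<times> 'j) set) (e::'j \<Rightarrow> real^3).
      invertible A \<longrightarrow>
      (compatible C e \<longleftrightarrow>
       compatible (map_constraints (\<lambda>c. c v* matrix_inv (transpose A)) C) (\<lambda>j. e j v* A)))
 \<and> (\<forall>(S::vel_space) (J::'j set) (C::((real^3) \<times> 'j \<times> 'j) set) (e::'j \<Rightarrow> real^3).
      finite J \<and> (\<forall>(c, j, k)\<in>C. j \<in> J \<and> k \<in> J) \<longrightarrow>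
      (\<forall>P g. invertible P \<longrightarrow>
         (kin_proj_transf S J C e P g \<longleftrightarrow>
           (\<exists>A \<psi>. A \<in> lin_class (proj_matrix (vel_kind S) P) \<and> (\<forall>j\<in>J. \<psi> j \<noteq> 0)
               \<and> compatibility_preserving C \<psi> e \<and> (\<forall>j\<in>J. g j = congruence \<psi> e j v* A))))
    \<and> (\<forall>g. (\<exists>P. kin_proj_transf S J C e P g) \<longleftrightarrow>
           (\<exists>A \<psi>. invertible A \<and> (\<forall>j\<in>J. \<psi> j \<noteq> 0)
               \<and> compatibility_preserving C \<psi> e \<and> (\<forall>j\<in>J. g j = congruence \<psi> e j v* A))))"
proof (intro conjI allI impI; (elim conjE)?)
  show "in_equilibrium Bs f \<longleftrightarrow> in_equilibrium Bs (\<lambda>i. f i v* A)" if "invertible A"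
    for A :: "real^3^3" and Bs :: "'i set set" and f
    using in_equilibrium_vector_matrix_mult[of Bs UNIV A "\<lambda>i. f i v* A" f] that by simp
  show "compatible C e \<longleftrightarrow>
       compatible (map_constraints (\<lambda>c. c v* matrix_inv (transpose A)) C) (\<lambda>j. e j v* A)"
    if "invertible A" for A :: "real^3^3" and C :: "((real^3) \<times> 'j \<times> 'j) set" and e
    using compatible_vector_matrix_mult[of C UNIV A "\<lambda>j. e j v* A" e] that by simp
qed (simp_all only: statics_proj_transf_iff kin_proj_transf_iff ex_lin_class_proj_matrix_iff simp_thms)

end
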